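(* Let $X^*$ be an optimal solution of the program defining $\vartheta^+(G)$. Then $X^*e=\vartheta^+(G)\operatorname{diag}(X^* )$.
   Context: Let $G$ be a simple graph with vertex set $V=\{1,\dots,n\}$ and edge set $E$; $e$ is the all-ones vector and $X\geq 0$ means entrywise nonnegativity. Schrijver's number is $$\vartheta^+(G)=\max\ \operatorname{trace}(X)\ \text{ s.t. } X-xx^T\succeq 0,\ \operatorname{diag}(X)=x,\ X_{i,j}=0\ \forall [i,j]\in E,\ X\geq 0,$$ which equals $\max \langle J,X\rangle$ s.t. $X\succeq 0$, $\operatorname{trace}(X)=1$, $X_{i,j}=0$ for $[i,j]\in E$, $X\geq 0$, where $J$ is the all-ones matrix. *)

theory Defs
  imports "HOL-Analysis.Analysis"
begin

text \<open>Vertices are the elements of a finite type 'n (so V = {1..n} up to renaming, n = CARD('n)).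
  A simple graph is a symmetric irreflexive edge relation E on 'n.\<close>

definition simple_graph :: "('n \<times> 'n) set \<Rightarrow> bool" where
  "simple_graph E \<longleftrightarrow> (\<forall>i j. (i, j) \<in> E \<longrightarrow> (j, i) \<in> E) \<and> (\<forall>i. (i, i) \<notin> E)"

definition psd :: "real^'n^'n \<Rightarrow> bool" where
  "psd M \<longleftrightarrow> transpose M = M \<and> (\<forall>v. 0 \<le> v \<bullet> (M *v v))"

definition diag_vec :: "real^'n^'n \<Rightarrow> real^'n" where
  "diag_vec X = (\<chi> i. X $ i $ i)"

definition outer :: "real^'n \<Rightarrow> real^'n \<Rightarrow> real^'n^'n" where
  "outer x y = (\<chi> i j. x $ i * y $ j)"

definition ones :: "real^'n" where
  "ones = (\<chi> i. 1)"

definition theta_plus_feasible :: "('n \<times> 'n) set \<Rightarrow> real^'n^'n \<Rightarrow> real^'n \<Rightarrow> bool" where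
  "theta_plus_feasible E X x \<longleftrightarrow>
     psd (X - outer x x) \<and> diag_vec X = x \<and>
     (\<forall>i j. (i, j) \<in> E \<longrightarrow> X $ i $ j = 0) \<and>
     (\<forall>i j. 0 \<le> X $ i $ j)"

definition theta_plus :: "('n::finite \<times> 'n) set \<Rightarrow> real" where
  "theta_plus E = Sup {trace X | X x. theta_plus_feasible E X x}"

definition theta_plus_optimal :: "('n::finite \<times> 'n) set \<Rightarrow> real^'n^'n \<Rightarrow> real^'n \<Rightarrow> bool" where
  "theta_plus_optimal E X x \<longleftrightarrow> theta_plus_feasible E X x \<and>
     (\<forall>Y y. theta_plus_feasible E Y y \<longrightarrow> trace Y \<le> trace X)"

end

theory Submission
  imports Defs
begin

text \<open>Write \<open>\<theta> = trace X\<close> and \<open>x = diag X\<close>, so \<open>\<theta> = e\<^sup>T x\<close>. Feasibility gives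
  \<open>e\<^sup>T X e \<ge> (e\<^sup>T x)\<^sup>2 = \<theta>\<^sup>2\<close>. If the inequality were strict, put \<open>r = sqrt (e\<^sup>T X e) > \<theta>\<close>. The vectors
  \<open>z\<close> with \<open>X - z z\<^sup>T \<succeq> 0\<close> form a convex set containing \<open>x\<close> and, by Cauchy-Schwarz, \<open>X e / r\<close>;
  for \<open>z = (1 - c) x + c X e / r\<close> the congruence \<open>D X D\<close> with \<open>D = diag (z / x)\<close> is feasible with
  trace \<open>\<Sum> z\<^sub>i\<^sup>2 / x\<^sub>i \<ge> (1 - c)\<^sup>2 \<theta> + 2 (1 - c) c r\<close>, which exceeds \<open>\<theta>\<close> for suitable \<open>c\<close>,
  contradicting optimality. Hence \<open>e\<^sup>T (X - x x\<^sup>T) e = 0\<close>, so \<open>(X - x x\<^sup>T) e = 0\<close>, i.e.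
  \<open>X e = \<theta> x\<close>.\<close>

lemma quadratic_nonneg_discriminant:
  fixes a b c :: real
  assumes nonneg: "\<And>t. 0 \<le> a + 2 * t * b + t\<^sup>2 * c" and "0 \<le> c"
  shows "b\<^sup>2 \<le> a * c"
proof (cases "c = 0")
  case True
  have "b = 0"
  proof (rule ccontr)
    assume "b \<noteq> 0"
    have "0 \<le> a + 2 * (- (a + 1) / (2 * b)) * b" using nonneg[of "- (a + 1) / (2 * b)"] True by simp
    also have "\<dots> = -1" using \<open>b \<noteq> 0\<close> by (simp add: field_simps)
    finally show False by simp
  qed
  then show ?thesis using True by simp
next
  case False
  then have "0 < c" using \<open>0 \<le> c\<close> by simp
  have "0 \<le> a + 2 * (- b / c) * b + (- b / c)\<^sup>2 * c" by (rule nonneg)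
  also have "\<dots> = a - b\<^sup>2 / c" using \<open>0 < c\<close> by (simp add: field_simps power2_eq_square)
  finally show ?thesis using \<open>0 < c\<close> by (simp add: field_simps mult.commute)
qed

lemma psd_inner_commute:
  assumes "psd A"
  shows "u \<bullet> (A *v w) = w \<bullet> (A *v u)"
proof -
  have "u \<bullet> (A *v w) = (u v* A) \<bullet> w" by (simp add: dot_lmul_matrix)
  also have "u v* A = transpose A *v u" by simp
  also have "\<dots> = A *v u" using assms by (simp add: psd_def)
  finally show ?thesis by (simp add: inner_commute)
qed

lemma psd_cauchy_schwarz:
  assumes "psd A"
  shows "(u \<bullet> (A *v w))\<^sup>2 \<le> (u \<bullet> (A *v u)) * (w \<bullet> (A *v w))"
proof (rule quadratic_nonneg_discriminant)
  show "0 \<le> w \<bullet> (A *v w)" using assms by (simp add: psd_def)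
next
  fix t :: real
  have "0 \<le> (u + t *\<^sub>R w) \<bullet> (A *v (u + t *\<^sub>R w))" using assms by (simp add: psd_def)
  also have "\<dots> = u \<bullet> (A *v u) + t * (u \<bullet> (A *v w)) + t * (w \<bullet> (A *v u)) + t\<^sup>2 * (w \<bullet> (A *v w))"
    by (simp add: matrix_vector_right_distrib matrix_vector_mult_scaleR inner_add_left
        inner_add_right power2_eq_square algebra_simps)
  finally show "0 \<le> u \<bullet> (A *v u) + 2 * t * (u \<bullet> (A *v w)) + t\<^sup>2 * (w \<bullet> (A *v w))"
    using psd_inner_commute[OF assms, of w u] by simp
qed

lemma psd_quadratic_form_zero_imp_kernel:
  assumes "psd A" and "v \<bullet> (A *v v) = 0"
  shows "A *v v = 0"
proof -
  have "((A *v v) \<bullet> (A *v v))\<^sup>2 \<le> ((A *v v) \<bullet> (A *v (A *v v))) * (v \<bullet> (A *v v))"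
    by (rule psd_cauchy_schwarz[OF assms(1)])
  then show ?thesis using assms(2) by simp
qed

lemma psd_diag_zero_imp_row_zero:
  assumes "psd A" and "A $ i $ i = 0"
  shows "(A *v v) $ i = 0"
proof -
  have "axis i 1 \<bullet> (A *v axis i 1) = 0"
    using assms(2) by (simp add: matrix_vector_mult_basis column_def inner_axis')
  then have "A *v axis i 1 = 0" by (rule psd_quadratic_form_zero_imp_kernel[OF assms(1)])
  then have "v \<bullet> (A *v axis i 1) = 0" by simp
  moreover have "(A *v v) $ i = axis i 1 \<bullet> (A *v v)" by (simp add: inner_axis')
  ultimately show ?thesis using psd_inner_commute[OF assms(1), of "axis i 1" v] by simp
qed

lemma outer_mult_vector: "outer z z *v w = (z \<bullet> w) *\<^sub>R z"
  by (simp add: vec_eq_iff outer_def matrix_vector_mult_def inner_vec_def sum_distrib_left mult_ac)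

lemma psd_diff_outer_iff:
  "psd (A - outer z z) \<longleftrightarrow> transpose A = A \<and> (\<forall>w. (z \<bullet> w)\<^sup>2 \<le> w \<bullet> (A *v w))"
proof -
  have "transpose (A - outer z z) = A - outer z z \<longleftrightarrow> transpose A = A"
    by (simp add: vec_eq_iff transpose_def outer_def mult.commute)
  moreover have "w \<bullet> ((A - outer z z) *v w) = w \<bullet> (A *v w) - (z \<bullet> w)\<^sup>2" for w
    by (simp add: matrix_vector_mult_diff_rdistrib outer_mult_vector inner_diff_right
        power2_eq_square inner_commute)
  ultimately show ?thesis by (simp add: psd_def)
qed

lemma psd_diff_outer_imp_psd:
  assumes "psd (A - outer z z)"
  shows "psd A"
  using assms unfolding psd_diff_outer_iff by (auto simp: psd_def intro: order_trans[OF zero_le_power2])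

lemma psd_diff_outer_convex:
  assumes "psd (A - outer p p)" and "psd (A - outer q q)" and "0 \<le> t" and "t \<le> 1"
  shows "psd (A - outer (t *\<^sub>R p + (1 - t) *\<^sub>R q) (t *\<^sub>R p + (1 - t) *\<^sub>R q))"
  unfolding psd_diff_outer_iff
proof (intro conjI allI)
  show "transpose A = A" using assms(1) by (simp add: psd_diff_outer_iff)
next
  fix w
  have "\<bar>p \<bullet> w\<bar> \<le> sqrt (w \<bullet> (A *v w))" and "\<bar>q \<bullet> w\<bar> \<le> sqrt (w \<bullet> (A *v w))"
    using assms(1,2) by (auto simp: psd_diff_outer_iff intro!: real_le_rsqrt)
  then have "t * \<bar>p \<bullet> w\<bar> + (1 - t) * \<bar>q \<bullet> w\<bar> \<le> t * sqrt (w \<bullet> (A *v w)) + (1 - t) * sqrt (w \<bullet> (A *v w))"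
    using assms(3,4) by (intro add_mono mult_left_mono) auto
  moreover have "\<bar>(t *\<^sub>R p + (1 - t) *\<^sub>R q) \<bullet> w\<bar> \<le> t * \<bar>p \<bullet> w\<bar> + (1 - t) * \<bar>q \<bullet> w\<bar>"
    using assms(3,4) abs_triangle_ineq[of "t * (p \<bullet> w)" "(1 - t) * (q \<bullet> w)"]
    by (simp add: inner_add_left abs_mult)
  ultimately have "\<bar>(t *\<^sub>R p + (1 - t) *\<^sub>R q) \<bullet> w\<bar> \<le> t * sqrt (w \<bullet> (A *v w)) + (1 - t) * sqrt (w \<bullet> (A *v w))"
    by linarith
  then show "((t *\<^sub>R p + (1 - t) *\<^sub>R q) \<bullet> w)\<^sup>2 \<le> w \<bullet> (A *v w)"
    by (intro sqrt_ge_absD) (simp add: algebra_simps)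
qed

lemma psd_diff_outer_range:
  assumes "psd A" and "0 < r" and "r\<^sup>2 = v \<bullet> (A *v v)"
  shows "psd (A - outer ((1 / r) *\<^sub>R (A *v v)) ((1 / r) *\<^sub>R (A *v v)))"
  unfolding psd_diff_outer_iff
proof (intro conjI allI)
  show "transpose A = A" using assms(1) by (simp add: psd_def)
next
  fix w
  have "((1 / r) *\<^sub>R (A *v v) \<bullet> w)\<^sup>2 = (v \<bullet> (A *v w))\<^sup>2 / r\<^sup>2"
    using psd_inner_commute[OF assms(1), of v w] by (simp add: inner_commute power_divide)
  also have "\<dots> \<le> (v \<bullet> (A *v v)) * (w \<bullet> (A *v w)) / r\<^sup>2"
    by (intro divide_right_mono psd_cauchy_schwarz[OF assms(1)]) simp
  also have "\<dots> = w \<bullet> (A *v w)" using assms(2) by (simp add: assms(3)[symmetric])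
  finally show "((1 / r) *\<^sub>R (A *v v) \<bullet> w)\<^sup>2 \<le> w \<bullet> (A *v w)" .
qed

definition diag_congruence :: "real^'n \<Rightarrow> real^'n^'n \<Rightarrow> real^'n^'n" where
  "diag_congruence d A = (\<chi> i j. d $ i * d $ j * A $ i $ j)"

lemma psd_diag_congruence:
  assumes "psd A"
  shows "psd (diag_congruence d A)"
  unfolding psd_def
proof (intro conjI allI)
  have "A $ i $ j = A $ j $ i" for i j
    using assms unfolding psd_def by (metis transpose_def vec_lambda_beta)
  then show "transpose (diag_congruence d A) = diag_congruence d A"
    by (simp add: vec_eq_iff transpose_def diag_congruence_def mult.commute)
next
  fix v
  have "v \<bullet> (diag_congruence d A *v v) = (d * v) \<bullet> (A *v (d * v))"
    by (simp add: diag_congruence_def inner_vec_def matrix_vector_mult_def sum_distrib_left mult_ac)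
  then show "0 \<le> v \<bullet> (diag_congruence d A *v v)" using assms by (simp add: psd_def)
qed

lemma diag_congruence_diff_outer:
  "diag_congruence d (A - outer z z) = diag_congruence d A - outer (d * z) (d * z)"
  by (simp add: vec_eq_iff diag_congruence_def outer_def right_diff_distrib mult_ac)

lemma tangent_le_square_div:
  fixes a x z :: real
  assumes "0 \<le> x" and "x = 0 \<Longrightarrow> z = 0"
  shows "2 * a * z - a\<^sup>2 * x \<le> z\<^sup>2 / x"
proof (cases "x = 0")
  case False
  then have "z\<^sup>2 / x - (2 * a * z - a\<^sup>2 * x) = (z - a * x)\<^sup>2 / x"
    by (simp add: field_simps power2_eq_square)
  also have "\<dots> \<ge> 0" using assms(1) by simp
  finally show ?thesis by simp
qed (use assms in simp)

lemma trace_eq_inner_ones_diag_vec: "trace X = ones \<bullet> diag_vec X"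
  by (simp add: trace_def ones_def diag_vec_def inner_vec_def)

lemma theta_plus_feasible_diag_nonneg:
  assumes "theta_plus_feasible E X x"
  shows "0 \<le> x $ i"
  using assms unfolding theta_plus_feasible_def diag_vec_def vec_eq_iff by (metis vec_lambda_beta)

lemma theta_plus_feasible_reweight:
  assumes feas: "theta_plus_feasible E X x" and psd: "psd (X - outer z z)"
    and z_nonneg: "\<And>i. 0 \<le> z $ i" and support: "\<And>i. x $ i = 0 \<Longrightarrow> z $ i = 0"
  shows "\<exists>Y y. theta_plus_feasible E Y y \<and> trace Y = (\<Sum>i\<in>UNIV. (z $ i)\<^sup>2 / x $ i)"
proof (intro exI conjI)
  define d where "d = (\<chi> i. z $ i / x $ i)"
  have dx: "d $ i * x $ i = z $ i" for i
    using support[of i] by (cases "x $ i = 0") (simp_all add: d_def)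
  have d_nonneg: "0 \<le> d $ i" for i
    using z_nonneg theta_plus_feasible_diag_nonneg[OF feas] by (simp add: d_def)
  have diag: "X $ i $ i = x $ i" for i
    using feas by (simp add: theta_plus_feasible_def diag_vec_def vec_eq_iff)
  have diag_Y: "diag_congruence d X $ i $ i = d $ i * z $ i" for i
    by (simp add: diag_congruence_def diag dx[symmetric] mult.assoc)
  show "theta_plus_feasible E (diag_congruence d X) (d * z)"
    unfolding theta_plus_feasible_def
  proof (intro conjI allI impI)
    show "psd (diag_congruence d X - outer (d * z) (d * z))"
      using psd_diag_congruence[OF psd] by (simp add: diag_congruence_diff_outer)
    show "diag_vec (diag_congruence d X) = d * z"
      by (simp add: diag_vec_def vec_eq_iff diag_Y)
    show "diag_congruence d X $ i $ j = 0" if "(i, j) \<in> E" for i j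
      using feas that by (simp add: theta_plus_feasible_def diag_congruence_def)
    show "0 \<le> diag_congruence d X $ i $ j" for i j
      using feas d_nonneg by (simp add: theta_plus_feasible_def diag_congruence_def)
  qed
  have "d $ i * z $ i = (z $ i)\<^sup>2 / x $ i" for i
    using dx[of i] by (simp add: d_def power2_eq_square)
  then show "trace (diag_congruence d X) = (\<Sum>i\<in>UNIV. (z $ i)\<^sup>2 / x $ i)"
    by (simp add: trace_def diag_Y)
qed

lemma theta_plus_optimal_eq_trace:
  assumes "theta_plus_optimal E X x"
  shows "theta_plus E = trace X"
  unfolding theta_plus_def
  by (rule cSup_eq_maximum) (use assms in \<open>auto simp: theta_plus_optimal_def\<close>)

text \<open>The map \<open>c \<mapsto> (1 - c)\<^sup>2 \<theta> + 2 (1 - c) c r\<close> has slope \<open>2 (r - \<theta>) > 0\<close> at \<open>c = 0\<close>.\<close>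

lemma exists_step_increasing:
  fixes \<theta> r :: real
  assumes "0 \<le> \<theta>" and "\<theta> < r"
  shows "\<exists>c. 0 \<le> c \<and> c \<le> 1 \<and> \<theta> < (1 - c)\<^sup>2 * \<theta> + 2 * (1 - c) * c * r"
proof (intro exI conjI)
  define c where "c = (r - \<theta>) / (2 * r - \<theta>)"
  show "0 \<le> c" and "c \<le> 1" using assms by (auto simp: c_def field_simps)
  have c_eq: "c * (2 * r - \<theta>) = r - \<theta>" using assms by (simp add: c_def)
  have "(1 - c)\<^sup>2 * \<theta> + 2 * (1 - c) * c * r = \<theta> + 2 * c * (r - \<theta>) - c * (c * (2 * r - \<theta>))"
    by (simp add: algebra_simps power2_eq_square)
  also have "\<dots> = \<theta> + c * (r - \<theta>)" by (simp add: c_eq)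
  finally show "\<theta> < (1 - c)\<^sup>2 * \<theta> + 2 * (1 - c) * c * r"
    using assms by (simp add: c_def)
qed

lemma theta_plus_feasible_tilt:
  assumes feas: "theta_plus_feasible E X x" and "0 \<le> c" and "c \<le> 1"
    and "0 < r" and r_sq: "r\<^sup>2 = ones \<bullet> (X *v ones)"
  shows "\<exists>Y y. theta_plus_feasible E Y y \<and> (1 - c)\<^sup>2 * trace X + 2 * (1 - c) * c * r \<le> trace Y"
proof -
  have psd_x: "psd (X - outer x x)" and X_nonneg: "\<And>i j. 0 \<le> X $ i $ j"
    using feas by (auto simp: theta_plus_feasible_def)
  have diag: "X $ i $ i = x $ i" for i
    using feas by (simp add: theta_plus_feasible_def diag_vec_def vec_eq_iff)
  have psd_X: "psd X" using psd_x by (rule psd_diff_outer_imp_psd)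
  have x_nonneg: "0 \<le> x $ i" for i using feas by (rule theta_plus_feasible_diag_nonneg)
  define u where "u = X *v ones"
  have u_nonneg: "0 \<le> u $ i" for i
    by (simp add: u_def matrix_vector_mult_def ones_def sum_nonneg X_nonneg)
  define z where "z = (1 - c) *\<^sub>R x + c *\<^sub>R ((1 / r) *\<^sub>R u)"
  have "psd (X - outer z z)"
    using psd_diff_outer_convex[OF psd_x psd_diff_outer_range[OF psd_X \<open>0 < r\<close> r_sq], of "1 - c"]
      \<open>0 \<le> c\<close> \<open>c \<le> 1\<close> by (simp add: z_def u_def)
  moreover have "0 \<le> z $ i" for i
    using \<open>0 \<le> c\<close> \<open>c \<le> 1\<close> \<open>0 < r\<close> x_nonneg u_nonneg by (simp add: z_def)
  moreover have support: "z $ i = 0" if "x $ i = 0" for i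
    using psd_diag_zero_imp_row_zero[OF psd_X, of i ones] that by (simp add: z_def u_def diag)
  ultimately obtain Y y where feas_Y: "theta_plus_feasible E Y y"
    and trace_Y: "trace Y = (\<Sum>i\<in>UNIV. (z $ i)\<^sup>2 / x $ i)"
    using theta_plus_feasible_reweight[OF feas] by blast
  have trace_sum: "trace X = (\<Sum>i\<in>UNIV. x $ i)" by (simp add: trace_def diag)
  have "(\<Sum>i\<in>UNIV. z $ i) = (1 - c) * trace X + c * ((\<Sum>i\<in>UNIV. u $ i) / r)"
    by (simp add: z_def trace_sum sum.distrib sum_distrib_left sum_divide_distrib)
  also have "(\<Sum>i\<in>UNIV. u $ i) = r\<^sup>2" by (simp add: r_sq u_def ones_def inner_vec_def)
  also have "r\<^sup>2 / r = r" using \<open>0 < r\<close> by (simp add: power2_eq_square)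
  finally have sum_z: "(\<Sum>i\<in>UNIV. z $ i) = (1 - c) * trace X + c * r" .
  have "(1 - c)\<^sup>2 * trace X + 2 * (1 - c) * c * r
      = 2 * (1 - c) * (\<Sum>i\<in>UNIV. z $ i) - (1 - c)\<^sup>2 * trace X"
    by (simp add: sum_z algebra_simps power2_eq_square)
  also have "\<dots> = (\<Sum>i\<in>UNIV. 2 * (1 - c) * z $ i - (1 - c)\<^sup>2 * x $ i)"
    by (simp add: trace_sum sum_subtractf sum_distrib_left)
  also have "\<dots> \<le> trace Y"
    unfolding trace_Y by (intro sum_mono tangent_le_square_div x_nonneg support)
  finally show ?thesis using feas_Y by blast
qed

lemma theta_plus_optimal_quadratic_ones_le:
  assumes "theta_plus_optimal E X x"
  shows "ones \<bullet> (X *v ones) \<le> (trace X)\<^sup>2"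
proof (rule ccontr)
  have feas: "theta_plus_feasible E X x"
    and opt: "\<And>Y y. theta_plus_feasible E Y y \<Longrightarrow> trace Y \<le> trace X"
    using assms by (auto simp: theta_plus_optimal_def)
  have "0 \<le> trace X"
    using feas by (auto simp: trace_def theta_plus_feasible_def intro: sum_nonneg)
  define r where "r = sqrt (ones \<bullet> (X *v ones))"
  assume "\<not> ones \<bullet> (X *v ones) \<le> (trace X)\<^sup>2"
  then have gt: "(trace X)\<^sup>2 < ones \<bullet> (X *v ones)" by simp
  have "trace X < r" using gt \<open>0 \<le> trace X\<close> by (simp add: r_def real_less_rsqrt)
  have "r\<^sup>2 = ones \<bullet> (X *v ones)"
    using le_less_trans[OF zero_le_power2 gt] by (simp add: r_def)
  have "0 < r" using \<open>0 \<le> trace X\<close> \<open>trace X < r\<close> by linarith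
  obtain c where c: "0 \<le> c" "c \<le> 1"
    and gain: "trace X < (1 - c)\<^sup>2 * trace X + 2 * (1 - c) * c * r"
    using exists_step_increasing[OF \<open>0 \<le> trace X\<close> \<open>trace X < r\<close>] by blast
  obtain Y y where feas_Y: "theta_plus_feasible E Y y"
    and "(1 - c)\<^sup>2 * trace X + 2 * (1 - c) * c * r \<le> trace Y"
    using theta_plus_feasible_tilt[OF feas c \<open>0 < r\<close> \<open>r\<^sup>2 = _\<close>] by blast
  then show False using opt[OF feas_Y] gain by linarith
qed

theorem mainTheorem11:
  fixes E :: "('n::finite \<times> 'n) set" and X :: "real^'n^'n" and x :: "real^'n"
  assumes "simple_graph E"
    and "theta_plus_optimal E X x"
  shows "X *v ones = theta_plus E *\<^sub>R diag_vec X"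
proof -
  have feas: "theta_plus_feasible E X x" using assms(2) by (simp add: theta_plus_optimal_def)
  then have psd_M: "psd (X - outer x x)" and diag: "diag_vec X = x"
    by (auto simp: theta_plus_feasible_def)
  have trace: "trace X = x \<bullet> ones" by (simp add: trace_eq_inner_ones_diag_vec diag inner_commute)
  have "ones \<bullet> ((X - outer x x) *v ones) = ones \<bullet> (X *v ones) - (trace X)\<^sup>2"
    by (simp add: matrix_vector_mult_diff_rdistrib outer_mult_vector inner_diff_right trace
        power2_eq_square inner_commute)
  also have "\<dots> \<le> 0" using theta_plus_optimal_quadratic_ones_le[OF assms(2)] by simp
  finally have "ones \<bullet> ((X - outer x x) *v ones) = 0"
    using psd_M by (simp add: psd_def eq_iff)
  then have "(X - outer x x) *v ones = 0" by (rule psd_quadratic_form_zero_imp_kernel[OF psd_M])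
  then show ?thesis
    by (simp add: theta_plus_optimal_eq_trace[OF assms(2)] trace diag
        matrix_vector_mult_diff_rdistrib outer_mult_vector)
qed

end
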